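(* Let $f:[0,\infty)\to[0,\infty)$ be continuous with $f(0)=0$, $f(v)>0$ for $v>0$, $v\mapsto f(v)/v$ nondecreasing on $(0,\infty)$, and $\lim_{v\to0^+}f_M(v)/v=0$, where $f_M(v):=\sup_{a\in(0,1)}\frac{f(av)}{f(a)}$ for $v\ge0$. Let $0\le\varphi\in L^1_{\mathrm{loc}}([0,\infty))$. Suppose that for no $0<u_0\in L^1(\mathbb{R}^n)$ does the problem $u_t-\mathcal{L}u=\varphi(t)f(u)$, $u(0)=u_0$, have a global mild solution, i.e. a function $u$ on $(0,\infty)\times\mathbb{R}^n$, finite everywhere, with $$u(t,x)=\int_{\mathbb{R}^n}\Gamma(0,y;t,x)u_0(y)\,dy+\int_0^t\int_{\mathbb{R}^n}\Gamma(0,y;t-\tau,x)\varphi(\tau)f(u(\tau,y))\,dy\,d\tau\quad\text{for all }t>0,\ x\in\mathbb{R}^n.$$ Then: (i) for every $0<w\in L^1(\mathbb{R}^n)$, writing $A_w(\tau,x):=\int_{\mathbb{R}^n}\Gamma(0,y;\tau,x)w(y)\,dy$, $$\int_0^\infty\varphi(\tau)\frac{f\big(\|A_w(\tau,\cdot)\|_{L^\infty(\mathbb{R}^n)}\big)}{\|A_w(\tau,\cdot)\|_{L^\infty(\mathbb{R}^n)}}\,d\tau=+\infty;$$ (ii) for every $\omega>0$, $$\int_1^\infty\varphi(\tau)\,\tau^{\frac q2}f\big(\omega\tau^{-\frac q2}\big)\,d\tau=+\infty.$$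
   Context: Standing setting. Let $X=\{X_1,\dots,X_m\}$ be smooth vector fields on $\mathbb{R}^n$, linearly independent as vector fields, satisfying: (H1) there are integers $1=\sigma_1\le\dots\le\sigma_n$ such that, with dilations $\delta_\lambda(x)=(\lambda^{\sigma_1}x_1,\dots,\lambda^{\sigma_n}x_n)$, $\lambda>0$, each $X_j$ is homogeneous of degree $1$, i.e. $X_j(\phi\circ\delta_\lambda)=\lambda\,(X_j\phi)\circ\delta_\lambda$ for all $\phi\in C^\infty(\mathbb{R}^n)$, $\lambda>0$; (H2) Hörmander's rank condition at $0$: the values at $0$ of the vector fields in the Lie algebra generated by $X_1,\dots,X_m$ span $\mathbb{R}^n$. Put $q:=\sigma_1+\dots+\sigma_n$, $\mathcal{L}:=\sum_{j=1}^mX_j^2$, $\mathcal{H}:=\partial_t-\mathcal{L}$. $\Gamma(t,x;s,y)$ denotes the global fundamental solution (heat kernel) of $\mathcal{H}$; for $t>0$, $x\mapsto\int\Gamma(0,y;t,x)\varphi(y)dy$ is the heat semigroup of $\mathcal{L}$ applied to $\varphi$. Known properties: $\Gamma\ge0$; $\Gamma(t,x;s,y)=0$ if $s\le t$; $\Gamma(0,y;t,x)=\Gamma(0,x;t,y)$; $\int_{\mathbb{R}^n}\Gamma(0,y;t,x)\,dy=1$ for $t>0$; $\Gamma(0,y;t+s,x)=\int\Gamma(0,w;t,x)\Gamma(0,y;s,w)\,dw$ for $t,s>0$; there is $\rho>1$ with $\frac{1}{\rho|B_X(x,\sqrt s)|}e^{-\rho d_X(x,y)^2/s}\le\Gamma(0,x;s,y)\le\frac{\rho}{|B_X(x,\sqrt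 s)|}e^{-d_X(x,y)^2/(\rho s)}$ for $s>0$, where $d_X$ is the Carnot–Carathéodory distance of $X$ and $B_X$ its balls; and $|B_X(x,r)|\ge c\,r^q$ for some $c>0$ and all $x,r$. *)

theory Defs
  imports "HOL-Analysis.Analysis" "HOL-Probability.Essential_Supremum"
begin

text \<open>The heat kernel is encoded as
  Gam t y x = Gamma(0,y;t,x) (source point y at time 0, target x at time t).
  The Hoermander vector fields are not modelled; the heat kernel Gam together with the
  Carnot-Caratheodory distance d and the homogeneous dimension q = sum of the sigma_i
  are taken as data satisfying the known properties listed in the setting.\<close>

definition homog_exponents :: "('n::finite \<Rightarrow> nat) \<Rightarrow> bool" where
  "homog_exponents \<sigma> \<longleftrightarrow> (\<forall>i. 1 \<le> \<sigma> i) \<and> (\<exists>i. \<sigma> i = 1)"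

definition hom_dim :: "('n::finite \<Rightarrow> nat) \<Rightarrow> nat" where
  "hom_dim \<sigma> = (\<Sum>i\<in>UNIV. \<sigma> i)"

definition ball_vol :: "(real^'n \<Rightarrow> real^'n \<Rightarrow> real) \<Rightarrow> real^'n \<Rightarrow> real \<Rightarrow> real" where
  "ball_vol d x r = measure lborel {y. d x y < r}"

definition heat_kernel_props ::
  "nat \<Rightarrow> (real \<Rightarrow> real^'n \<Rightarrow> real^'n \<Rightarrow> real) \<Rightarrow> (real^'n \<Rightarrow> real^'n \<Rightarrow> real) \<Rightarrow> bool" where
  "heat_kernel_props q Gam d \<longleftrightarrow>
     (\<lambda>p. Gam (fst p) (fst (snd p)) (snd (snd p))) \<in> borel_measurable borel \<and>
     (\<forall>t y x. 0 \<le> Gam t y x) \<and>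
     (\<forall>t y x. t \<le> 0 \<longrightarrow> Gam t y x = 0) \<and>
     (\<forall>t y x. Gam t y x = Gam t x y) \<and>
     (\<forall>t x. 0 < t \<longrightarrow> integrable lborel (\<lambda>y. Gam t y x) \<and> (\<integral>y. Gam t y x \<partial>lborel) = 1) \<and>
     (\<forall>t s y x. 0 < t \<longrightarrow> 0 < s \<longrightarrow>
        Gam (t + s) y x = (\<integral>w. Gam t w x * Gam s y w \<partial>lborel)) \<and>
     (\<exists>\<rho>>1. \<forall>s x y. 0 < s \<longrightarrow>
        exp (- \<rho> * d x y ^ 2 / s) / (\<rho> * ball_vol d x (sqrt s)) \<le> Gam s x y \<and>
        Gam s x y \<le> \<rho> / ball_vol d x (sqrt s) * exp (- (d x y ^ 2) / (\<rho> * s))) \<and>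
     (\<exists>c>0. \<forall>x r. 0 \<le> r \<longrightarrow> c * r ^ q \<le> ball_vol d x r)"

text \<open>d is a continuous metric (as the Carnot-Caratheodory distance is under (H2)).\<close>
definition cc_metric :: "(real^'n \<Rightarrow> real^'n \<Rightarrow> real) \<Rightarrow> bool" where
  "cc_metric d \<longleftrightarrow> continuous_on UNIV (\<lambda>p. d (fst p) (snd p)) \<and>
     (\<forall>x y. 0 \<le> d x y \<and> (d x y = 0 \<longleftrightarrow> x = y) \<and> d x y = d y x) \<and>
     (\<forall>x y z. d x z \<le> d x y + d y z)"

definition fM :: "(real \<Rightarrow> real) \<Rightarrow> real \<Rightarrow> real" where
  "fM f v = (SUP a\<in>{0<..<1}. f (a * v) / f a)"

text \<open>0 < u0 in L^1(R^n): nonnegative, integrable, not a.e. zero.\<close>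
definition pos_L1 :: "(real^'n \<Rightarrow> real) \<Rightarrow> bool" where
  "pos_L1 w \<longleftrightarrow> (\<forall>x. 0 \<le> w x) \<and> integrable lborel w \<and> 0 < (\<integral>x. w x \<partial>lborel)"

definition heat_sg :: "(real \<Rightarrow> real^'n \<Rightarrow> real^'n \<Rightarrow> real) \<Rightarrow> (real^'n \<Rightarrow> real) \<Rightarrow> real \<Rightarrow> real^'n \<Rightarrow> real" where
  "heat_sg Gam w t x = (\<integral>y. Gam t y x * w y \<partial>lborel)"

definition Linf_norm :: "(real^'n \<Rightarrow> real) \<Rightarrow> ereal" where
  "Linf_norm g = esssup lborel (\<lambda>x. ereal \<bar>g x\<bar>)"

definition global_mild_solution ::
  "(real \<Rightarrow> real^'n \<Rightarrow> real^'n \<Rightarrow> real) \<Rightarrow> (real \<Rightarrow> real) \<Rightarrow> (real \<Rightarrow> real) \<Rightarrow>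
   (real^'n \<Rightarrow> real) \<Rightarrow> (real \<Rightarrow> real^'n \<Rightarrow> real) \<Rightarrow> bool" where
  "global_mild_solution Gam \<phi> f u0 u \<longleftrightarrow>
     (\<lambda>p. u (fst p) (snd p)) \<in> borel_measurable borel \<and>
     (\<forall>t x. 0 < t \<longrightarrow> 0 \<le> u t x) \<and>
     (\<forall>t x. 0 < t \<longrightarrow>
        ennreal (u t x) =
          (\<integral>\<^sup>+y. ennreal (Gam t y x * u0 y) \<partial>lborel) +
          (\<integral>\<^sup>+\<tau>. indicator {0<..<t} \<tau> *
              (\<integral>\<^sup>+y. ennreal (Gam (t - \<tau>) y x * \<phi> \<tau> * f (u \<tau> y)) \<partial>lborel) \<partial>lborel))"

end

theory Submission
  imports Defs
begin

text \<open>
  Part (i) is proved by contraposition. The hypothesis on \<open>fM\<close> forces \<open>f v / v \<rightarrow> 0\<close> as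
  \<open>v \<rightarrow> 0+\<close>, so if the integral in (i) is finite for some \<open>w\<close>, dominated convergence makes it
  smaller than 1/2 once \<open>N(\<tau>) = \<parallel>A\<^sub>w(\<tau>)\<parallel>\<^sub>\<infinity>\<close> is replaced by \<open>\<delta> N(\<tau>)\<close> for a small \<open>\<delta> > 0\<close>.
  Since \<open>A\<^sub>w(\<tau>) \<le> N(\<tau>)\<close> a.e. and \<open>f v / v\<close> is nondecreasing,
  \<open>f(\<delta> A\<^sub>w(\<tau>)) \<le> \<delta> A\<^sub>w(\<tau>) f(\<delta> N(\<tau>)) / (\<delta> N(\<tau>))\<close>; with the semigroup identity
  \<open>\<integral> \<Gamma>(t - \<tau>) A\<^sub>w(\<tau>) = A\<^sub>w(t)\<close> this makes \<open>\<delta> A\<^sub>w\<close> a supersolution for the initial datum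
  \<open>\<delta> w / 2\<close>, and monotone iteration of the Duhamel map from 0 converges below it to a global
  mild solution.

  Part (ii) follows from (i) with \<open>w = m \<one>\<^bsub>[0,1]\<^sup>n\<^esub>\<close>: the on-diagonal bound
  \<open>\<Gamma>(s) \<le> K s\<^sup>-\<^sup>q\<^sup>/\<^sup>2\<close> gives \<open>N(\<tau>) \<le> min m (K m \<tau>\<^sup>-\<^sup>q\<^sup>/\<^sup>2)\<close>, and for \<open>m = \<omega> / K\<close>
  the monotonicity of \<open>f v / v\<close> bounds the integrand of (i) by \<open>(f m / m) \<phi>\<close> on \<open>(0,1]\<close>
  and by \<open>\<phi>(\<tau>) \<tau>\<^sup>q\<^sup>/\<^sup>2 f(\<omega> \<tau>\<^sup>-\<^sup>q\<^sup>/\<^sup>2) / \<omega>\<close> on \<open>[1,\<infinity>)\<close>.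
\<close>

lemma measurable_compose_uncurried:
  assumes "(\<lambda>p. v (fst p) (snd p)) \<in> N1 \<Otimes>\<^sub>M N2 \<rightarrow>\<^sub>M K"
    and "a \<in> M \<rightarrow>\<^sub>M N1" and "b \<in> M \<rightarrow>\<^sub>M N2"
  shows "(\<lambda>z. v (a z) (b z)) \<in> M \<rightarrow>\<^sub>M K"
  using measurable_compose[OF measurable_Pair[OF assms(2,3)] assms(1)] by simp

lemma Linf_norm_nonneg:
  fixes g :: "real^'n::finite \<Rightarrow> real"
  shows "0 \<le> Linf_norm g"
proof -
  have "esssup lborel (\<lambda>x::real^'n. 0::ereal) \<le> Linf_norm g"
    unfolding Linf_norm_def by (rule esssup_mono) auto
  then show ?thesis
    by (simp add: esssup_const)
qed

lemma measurable_snd_lborel[measurable]: "snd \<in> M \<Otimes>\<^sub>M lborel \<rightarrow>\<^sub>M borel"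
  using measurable_snd[of M lborel] by simp

lemma pred_greaterThanLessThan[measurable]:
  fixes f g h :: "'a \<Rightarrow> real"
  assumes [measurable]: "f \<in> borel_measurable M" "g \<in> borel_measurable M" "h \<in> borel_measurable M"
  shows "Measurable.pred M (\<lambda>x. f x \<in> {g x<..<h x})"
  unfolding greaterThanLessThan_iff by measurable

locale heat_kernel =
  fixes q :: nat and Gam :: "real \<Rightarrow> real^'n::finite \<Rightarrow> real^'n \<Rightarrow> real"
    and d :: "real^'n \<Rightarrow> real^'n \<Rightarrow> real"
  assumes kernel: "heat_kernel_props q Gam d"
begin

lemma Gam_measurable[measurable]:
  assumes [measurable]: "a \<in> borel_measurable M" "b \<in> M \<rightarrow>\<^sub>M borel" "c \<in> M \<rightarrow>\<^sub>M borel"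
  shows "(\<lambda>z. Gam (a z) (b z) (c z)) \<in> borel_measurable M"
proof -
  have "(\<lambda>z. (b z, c z)) \<in> M \<rightarrow>\<^sub>M (borel :: ((real^'n) \<times> (real^'n)) measure)"
    unfolding borel_prod[symmetric] by measurable
  then have abc: "(\<lambda>z. (a z, b z, c z)) \<in> M \<rightarrow>\<^sub>M (borel :: (real \<times> (real^'n) \<times> (real^'n)) measure)"
    unfolding borel_prod[symmetric] by measurable
  have "(\<lambda>p. Gam (fst p) (fst (snd p)) (snd (snd p))) \<in> borel_measurable borel"
    using kernel by (simp add: heat_kernel_props_def)
  from measurable_compose[OF abc this] show ?thesis
    by (simp only: fst_conv snd_conv)
qed

lemma Gam_nonneg: "0 \<le> Gam t y x"
  using kernel by (simp add: heat_kernel_props_def)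

lemma Gam_eq_0: "t \<le> 0 \<Longrightarrow> Gam t y x = 0"
  using kernel by (simp add: heat_kernel_props_def)

lemma Gam_commute: "Gam t y x = Gam t x y"
  using kernel unfolding heat_kernel_props_def by blast

lemma integrable_Gam: "0 < t \<Longrightarrow> integrable lborel (\<lambda>y. Gam t y x)"
  using kernel by (simp add: heat_kernel_props_def)

lemma integral_Gam: "0 < t \<Longrightarrow> (\<integral>y. Gam t y x \<partial>lborel) = 1"
  using kernel by (simp add: heat_kernel_props_def)

lemma Gam_add: "0 < t \<Longrightarrow> 0 < s \<Longrightarrow> Gam (t + s) y x = (\<integral>z. Gam t z x * Gam s y z \<partial>lborel)"
  using kernel unfolding heat_kernel_props_def by blast

lemma Gam_le_powr: "\<exists>K>0. \<forall>s x y. 0 < s \<longrightarrow> Gam s x y \<le> K / s powr (real q / 2)"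
proof -
  obtain \<rho> where "\<rho> > 1" and \<rho>: "\<forall>s x y. 0 < s \<longrightarrow>
      Gam s x y \<le> \<rho> / ball_vol d x (sqrt s) * exp (- (d x y ^ 2) / (\<rho> * s))"
    using kernel unfolding heat_kernel_props_def by (elim conjE exE) blast
  obtain c where "c > 0" and c: "\<forall>x r. 0 \<le> r \<longrightarrow> c * r ^ q \<le> ball_vol d x r"
    using kernel unfolding heat_kernel_props_def by (elim conjE exE) blast
  have "Gam s x y \<le> \<rho> / c / s powr (real q / 2)" if s: "0 < s" for s x y
  proof -
    have "sqrt s ^ q = s powr (real q / 2)"
      using s by (simp add: powr_half_sqrt[symmetric] powr_realpow[symmetric] powr_powr)
    then have vol: "c * s powr (real q / 2) \<le> ball_vol d x (sqrt s)"
      using c[rule_format, of "sqrt s" x] s by simp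
    have pos: "0 < c * s powr (real q / 2)"
      using \<open>c > 0\<close> s by simp
    have "Gam s x y \<le> \<rho> / ball_vol d x (sqrt s) * exp (- (d x y ^ 2) / (\<rho> * s))"
      using \<rho> s by blast
    also have "\<dots> \<le> \<rho> / ball_vol d x (sqrt s)"
    proof (rule mult_left_le)
      show "exp (- (d x y ^ 2) / (\<rho> * s)) \<le> 1"
        using \<open>\<rho> > 1\<close> s by (simp add: divide_nonneg_pos)
      show "0 \<le> \<rho> / ball_vol d x (sqrt s)"
        using \<open>\<rho> > 1\<close> pos vol by simp
    qed
    also have "\<dots> \<le> \<rho> / (c * s powr (real q / 2))"
      using \<open>\<rho> > 1\<close> pos vol by (intro divide_left_mono) auto
    finally show ?thesis by simp
  qed
  then show ?thesis
    using \<open>\<rho> > 1\<close> \<open>c > 0\<close> by (intro exI[of _ "\<rho> / c"]) auto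
qed

lemma Gam_bounded: "0 < s \<Longrightarrow> \<exists>B. \<forall>x y. Gam s x y \<le> B"
  using Gam_le_powr by blast

lemma nn_integral_Gam: "0 < t \<Longrightarrow> (\<integral>\<^sup>+y. ennreal (Gam t y x) \<partial>lborel) = 1"
  using nn_integral_eq_integral[OF integrable_Gam] integral_Gam Gam_nonneg by simp

lemma nn_integral_Gam_mult_Gam:
  assumes "0 < t" "0 < s"
  shows "(\<integral>\<^sup>+z. ennreal (Gam t z x * Gam s y z) \<partial>lborel) = ennreal (Gam (t + s) y x)"
proof -
  obtain B where B: "\<forall>x y. Gam t x y \<le> B"
    using Gam_bounded[OF \<open>0 < t\<close>] by blast
  have "integrable lborel (\<lambda>z. B * Gam s y z)"
    using integrable_Gam[OF \<open>0 < s\<close>, of y] by (simp add: Gam_commute[of s y])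
  then have "integrable lborel (\<lambda>z. Gam t z x * Gam s y z)"
    by (rule Bochner_Integration.integrable_bound)
       (use B Gam_nonneg in \<open>auto intro!: AE_I2 order_trans[OF mult_right_mono abs_ge_self]\<close>)
  from nn_integral_eq_integral[OF this AE_I2[OF mult_nonneg_nonneg[OF Gam_nonneg Gam_nonneg]]]
  show ?thesis
    by (simp add: Gam_add[OF assms])
qed

lemma nn_integral_Gam_semigroup:
  fixes g :: "real^'n \<Rightarrow> ennreal"
  assumes "0 < t" "0 < s" and [measurable]: "g \<in> borel_measurable borel"
  shows "(\<integral>\<^sup>+z. ennreal (Gam t z x) * (\<integral>\<^sup>+y. ennreal (Gam s y z) * g y \<partial>lborel) \<partial>lborel)
       = (\<integral>\<^sup>+y. ennreal (Gam (t + s) y x) * g y \<partial>lborel)"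
proof -
  have "(\<integral>\<^sup>+z. ennreal (Gam t z x) * (\<integral>\<^sup>+y. ennreal (Gam s y z) * g y \<partial>lborel) \<partial>lborel)
      = (\<integral>\<^sup>+z. (\<integral>\<^sup>+y. ennreal (Gam t z x) * (ennreal (Gam s y z) * g y) \<partial>lborel) \<partial>lborel)"
    by (intro nn_integral_cong nn_integral_cmult[symmetric]) measurable
  also have "\<dots> = (\<integral>\<^sup>+z. (\<integral>\<^sup>+y. g y * ennreal (Gam t z x * Gam s y z) \<partial>lborel) \<partial>lborel)"
    by (intro nn_integral_cong) (simp add: ennreal_mult Gam_nonneg mult_ac)
  also have "\<dots> = (\<integral>\<^sup>+y. (\<integral>\<^sup>+z. g y * ennreal (Gam t z x * Gam s y z) \<partial>lborel) \<partial>lborel)"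
    by (rule lborel_pair.Fubini'[symmetric]) measurable
  also have "\<dots> = (\<integral>\<^sup>+y. g y * (\<integral>\<^sup>+z. ennreal (Gam t z x * Gam s y z) \<partial>lborel) \<partial>lborel)"
    by (intro nn_integral_cong nn_integral_cmult) measurable
  also have "\<dots> = (\<integral>\<^sup>+y. ennreal (Gam (t + s) y x) * g y \<partial>lborel)"
    by (intro nn_integral_cong) (simp only: nn_integral_Gam_mult_Gam[OF assms(1,2)] mult.commute[of "g _"])
  finally show ?thesis .
qed

definition heat_Linf :: "(real^'n \<Rightarrow> real) \<Rightarrow> real \<Rightarrow> real" where
  "heat_Linf w t = real_of_ereal (Linf_norm (heat_sg Gam w t))"

lemma heat_sg_eq_0: "t \<le> 0 \<Longrightarrow> heat_sg Gam w t x = 0"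
  by (simp add: heat_sg_def Gam_eq_0)

lemma heat_Linf_eq_0: "t \<le> 0 \<Longrightarrow> heat_Linf w t = 0"
  by (simp add: heat_Linf_def Linf_norm_def heat_sg_eq_0 esssup_const)

lemma heat_Linf_nonneg: "0 \<le> heat_Linf w t"
  unfolding heat_Linf_def using Linf_norm_nonneg by (rule real_of_ereal_pos)

context
  fixes w :: "real^'n \<Rightarrow> real"
  assumes w_nonneg: "\<And>y. 0 \<le> w y" and w_integrable: "integrable lborel w"
begin

lemma w_measurable: "w \<in> borel_measurable borel"
  using borel_measurable_integrable[OF w_integrable] by simp

lemma heat_sg_measurable: "heat_sg Gam w t \<in> borel_measurable borel"
proof -
  note [measurable] = w_measurable
  have "(\<lambda>x. \<integral>y. Gam t y x * w y \<partial>lborel) \<in> borel_measurable lborel"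
    by measurable
  then show ?thesis
    by (simp add: heat_sg_def[abs_def])
qed

lemma integrable_Gam_mult: "0 < t \<Longrightarrow> integrable lborel (\<lambda>y. Gam t y x * w y)"
proof -
  assume "0 < t"
  then obtain B where B: "\<forall>x y. Gam t x y \<le> B"
    using Gam_bounded by blast
  show ?thesis
    by (rule Bochner_Integration.integrable_bound[of _ "\<lambda>y. B * w y"])
       (use w_integrable B w_nonneg Gam_nonneg in
         \<open>auto intro!: AE_I2 order_trans[OF mult_right_mono abs_ge_self]\<close>)
qed

lemma heat_sg_nonneg: "0 \<le> heat_sg Gam w t x"
  unfolding heat_sg_def by (simp add: Gam_nonneg w_nonneg)

lemma ennreal_heat_sg:
  "0 < t \<Longrightarrow> ennreal (heat_sg Gam w t x) = (\<integral>\<^sup>+y. ennreal (Gam t y x) * ennreal (w y) \<partial>lborel)"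
  using nn_integral_eq_integral[OF integrable_Gam_mult]
  by (simp add: heat_sg_def ennreal_mult Gam_nonneg w_nonneg)

lemma heat_sg_le_integral:
  assumes "0 < t" and "\<And>y. Gam t y x \<le> B"
  shows "heat_sg Gam w t x \<le> B * (\<integral>y. w y \<partial>lborel)"
proof -
  have "heat_sg Gam w t x \<le> (\<integral>y. B * w y \<partial>lborel)"
    unfolding heat_sg_def using assms w_integrable
    by (intro integral_mono integrable_Gam_mult) (auto simp: w_nonneg intro!: mult_right_mono)
  then show ?thesis
    by simp
qed

lemma heat_sg_le_sup:
  assumes "0 < t" and "\<And>y. w y \<le> m"
  shows "heat_sg Gam w t x \<le> m"
proof -
  have "heat_sg Gam w t x \<le> (\<integral>y. Gam t y x * m \<partial>lborel)"
    unfolding heat_sg_def using assms integrable_Gam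
    by (intro integral_mono integrable_Gam_mult) (auto simp: Gam_nonneg intro!: mult_left_mono)
  then show ?thesis
    using integral_Gam[OF \<open>0 < t\<close>] by simp
qed

lemma heat_sg_semigroup:
  assumes "0 < s" "s < t"
  shows "(\<integral>\<^sup>+z. ennreal (Gam (t - s) z x) * ennreal (heat_sg Gam w s z) \<partial>lborel)
       = ennreal (heat_sg Gam w t x)"
proof -
  note [measurable] = w_measurable
  have "(\<integral>\<^sup>+z. ennreal (Gam (t - s) z x) * ennreal (heat_sg Gam w s z) \<partial>lborel)
     = (\<integral>\<^sup>+z. ennreal (Gam (t - s) z x) * (\<integral>\<^sup>+y. ennreal (Gam s y z) * ennreal (w y) \<partial>lborel) \<partial>lborel)"
    using assms by (simp add: ennreal_heat_sg)
  also have "\<dots> = (\<integral>\<^sup>+y. ennreal (Gam (t - s + s) y x) * ennreal (w y) \<partial>lborel)"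
    using assms by (intro nn_integral_Gam_semigroup) auto
  also have "\<dots> = ennreal (heat_sg Gam w t x)"
    using assms by (simp add: ennreal_heat_sg)
  finally show ?thesis .
qed

lemma ereal_heat_Linf:
  assumes "0 < t"
  shows "ereal (heat_Linf w t) = esssup lborel (\<lambda>x. ereal (heat_sg Gam w t x))"
proof -
  note [measurable] = heat_sg_measurable
  obtain B where "\<forall>x y. Gam t x y \<le> B"
    using Gam_bounded[OF assms] by blast
  then have "esssup lborel (\<lambda>x. ereal (heat_sg Gam w t x)) \<le> ereal (B * (\<integral>y. w y \<partial>lborel))"
    using assms by (intro esssup_I) (auto intro: heat_sg_le_integral)
  moreover have "Linf_norm (heat_sg Gam w t) = esssup lborel (\<lambda>x. ereal (heat_sg Gam w t x))"
    by (simp add: Linf_norm_def heat_sg_nonneg)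
  moreover have "0 \<le> esssup lborel (\<lambda>x. ereal (heat_sg Gam w t x))"
    using Linf_norm_nonneg calculation(2) by metis
  ultimately show ?thesis
    unfolding heat_Linf_def by (cases "esssup lborel (\<lambda>x. ereal (heat_sg Gam w t x))") auto
qed

lemma AE_heat_sg_le_heat_Linf: "0 < t \<Longrightarrow> AE x in lborel. heat_sg Gam w t x \<le> heat_Linf w t"
  using esssup_AE[of "\<lambda>x. ereal (heat_sg Gam w t x)" lborel]
  by (simp add: ereal_heat_Linf[symmetric])

lemma heat_Linf_le:
  assumes "0 < t" and "\<And>x. heat_sg Gam w t x \<le> K"
  shows "heat_Linf w t \<le> K"
proof -
  note [measurable] = heat_sg_measurable
  have "esssup lborel (\<lambda>x. ereal (heat_sg Gam w t x)) \<le> ereal K"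
    using assms by (intro esssup_I) auto
  then show ?thesis
    by (simp add: ereal_heat_Linf[OF \<open>0 < t\<close>, symmetric])
qed

lemma heat_Linf_antimono:
  assumes "0 < s" "s \<le> t"
  shows "heat_Linf w t \<le> heat_Linf w s"
proof (cases "s = t")
  case False
  then have "s < t"
    using assms by simp
  have "heat_sg Gam w t x \<le> heat_Linf w s" for x
  proof -
    have "ennreal (heat_sg Gam w t x)
        = (\<integral>\<^sup>+z. ennreal (Gam (t - s) z x) * ennreal (heat_sg Gam w s z) \<partial>lborel)"
      using heat_sg_semigroup[OF \<open>0 < s\<close> \<open>s < t\<close>] by simp
    also have "\<dots> \<le> (\<integral>\<^sup>+z. ennreal (Gam (t - s) z x) * ennreal (heat_Linf w s) \<partial>lborel)"
      using AE_heat_sg_le_heat_Linf[OF \<open>0 < s\<close>]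
      by (intro nn_integral_mono_AE) (auto elim!: eventually_mono intro!: mult_left_mono ennreal_leI)
    also have "\<dots> = ennreal (heat_Linf w s)"
      using \<open>s < t\<close> by (simp add: nn_integral_multc nn_integral_Gam)
    finally show ?thesis
      using heat_Linf_nonneg by (simp add: ennreal_le_iff)
  qed
  then show ?thesis
    using assms by (intro heat_Linf_le) auto
qed simp

lemma heat_Linf_measurable: "heat_Linf w \<in> borel_measurable borel"
proof -
  have "mono_on {0<..} (\<lambda>t. - heat_Linf w t)"
    by (auto simp: mono_on_def intro: heat_Linf_antimono)
  then have "(\<lambda>t. - (- heat_Linf w t)) \<in> borel_measurable (restrict_space borel {0<..})"
    by (intro borel_measurable_uminus borel_measurable_mono_on_fnc)
  then have "(\<lambda>t. if t \<in> {0<..} then heat_Linf w t else 0) \<in> borel_measurable borel"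
    by (subst measurable_restrict_space_iff[symmetric]) auto
  also have "(\<lambda>t. if t \<in> {0<..} then heat_Linf w t else 0) = heat_Linf w"
    by (auto simp: fun_eq_iff heat_Linf_eq_0)
  finally show ?thesis .
qed

end

lemma heat_Linf_unit_cube_le:
  assumes K: "\<forall>s x y. 0 < s \<longrightarrow> Gam s x y \<le> K / s powr (real q / 2)"
    and "0 < \<tau>" "0 \<le> m"
  shows "heat_Linf (\<lambda>y. m * indicator (cbox 0 One) y) \<tau> \<le> min m (K * m / \<tau> powr (real q / 2))"
proof -
  let ?w = "\<lambda>y::real^'n. m * indicator (cbox 0 One) y"
  have w_nonneg: "0 \<le> ?w y" for y
    using \<open>0 \<le> m\<close> by simp
  have w_integrable: "integrable lborel ?w"
    by (intro integrable_mult_right integrable_real_indicator) (auto simp: emeasure_lborel_cbox_finite)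
  have "(\<integral>y. ?w y \<partial>lborel) = m"
    by (simp add: measure_def emeasure_lborel_cbox_eq)
  then have "heat_sg Gam ?w \<tau> x \<le> K / \<tau> powr (real q / 2) * m" for x
    using heat_sg_le_integral[OF w_nonneg w_integrable \<open>0 < \<tau>\<close>] K \<open>0 < \<tau>\<close> by metis
  moreover have "heat_sg Gam ?w \<tau> x \<le> m" for x
    using \<open>0 \<le> m\<close> by (intro heat_sg_le_sup[OF w_nonneg w_integrable \<open>0 < \<tau>\<close>]) (simp add: indicator_def)
  ultimately show ?thesis
    using heat_Linf_le[OF w_nonneg w_integrable \<open>0 < \<tau>\<close>] by simp
qed

end

locale nonlinearity =
  fixes f :: "real \<Rightarrow> real"
  assumes f_cont: "continuous_on {0..} f"
    and f0: "f 0 = 0"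
    and f_pos: "\<forall>v>0. 0 < f v"
    and f_quot_mono: "mono_on {0<..} (\<lambda>v. f v / v)"
    and fM_lim: "((\<lambda>v. fM f v / v) \<longlongrightarrow> 0) (at_right 0)"
begin

lemma f_nonneg: "0 \<le> v \<Longrightarrow> 0 \<le> f v"
  using f0 f_pos[rule_format, of v] by (cases "v = 0") auto

lemma quot_nonneg: "0 \<le> v \<Longrightarrow> 0 \<le> f v / v"
  using f_nonneg by simp

lemma quot_mono: "0 \<le> a \<Longrightarrow> a \<le> b \<Longrightarrow> f a / a \<le> f b / b"
  using f_quot_mono quot_nonneg[of b] by (cases "a = 0") (auto simp: mono_on_def)

lemma f_le_mult_quot:
  assumes "0 \<le> a" "a \<le> b"
  shows "f a \<le> a * (f b / b)"
proof (cases "a = 0")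
  case False
  then have "f a = a * (f a / a)"
    by simp
  also have "\<dots> \<le> a * (f b / b)"
    using assms by (intro mult_left_mono quot_mono)
  finally show ?thesis .
qed (simp add: f0)

lemma f_mono:
  assumes "0 \<le> a" "a \<le> b"
  shows "f a \<le> f b"
proof (cases "b = 0")
  case False
  have "f a \<le> a * (f b / b)"
    using assms by (rule f_le_mult_quot)
  also have "\<dots> \<le> b * (f b / b)"
    using assms quot_nonneg by (intro mult_right_mono) auto
  finally show ?thesis
    using False by simp
qed (use assms in simp)

text \<open>Taking \<open>a = 1/2\<close> in the supremum defining \<open>fM f (2 * s)\<close> gives
  \<open>f s \<le> fM f (2 * s) * f (1/2)\<close>.\<close>
lemma tendsto_quot_0: "((\<lambda>v. f v / v) \<longlongrightarrow> 0) (at_right 0)"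
proof (rule tendsto_sandwich[where f = "\<lambda>_. 0" and h = "\<lambda>s. fM f (2 * s) / (2 * s) * (2 * f (1/2))"])
  show "\<forall>\<^sub>F s in at_right 0. 0 \<le> f s / s"
    unfolding eventually_at_right_field by (auto intro!: exI[of _ 1] quot_nonneg)
  show "\<forall>\<^sub>F s in at_right 0. f s / s \<le> fM f (2 * s) / (2 * s) * (2 * f (1/2))"
    unfolding eventually_at_right_field
  proof (intro exI[of _ "1/2"] conjI allI impI)
    fix s :: real
    assume "0 < s" "s < 1/2"
    have "bdd_above ((\<lambda>a. f (a * (2 * s)) / f a) ` {0<..<1})"
    proof (rule bdd_aboveI2)
      fix a :: real
      assume a: "a \<in> {0<..<1}"
      then have "f (a * (2 * s)) \<le> (a * (2 * s)) * (f a / a)"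
        using \<open>0 < s\<close> \<open>s < 1/2\<close> by (intro f_le_mult_quot) auto
      then show "f (a * (2 * s)) / f a \<le> 2 * s"
        using a f_pos by (simp add: divide_le_eq)
    qed
    then have "f (1/2 * (2 * s)) / f (1/2) \<le> fM f (2 * s)"
      unfolding fM_def by (rule cSUP_upper[rotated]) auto
    then show "f s / s \<le> fM f (2 * s) / (2 * s) * (2 * f (1/2))"
      using \<open>0 < s\<close> f_pos by (simp add: divide_le_eq field_simps)
  qed simp
  have "filterlim (\<lambda>s. 2 * s) (at_right (0::real)) (at_right 0)"
    by (rule filterlim_at_withinI) (auto simp: eventually_at_filter intro!: tendsto_eq_intros)
  from tendsto_mult_right[OF filterlim_compose[OF fM_lim this], of "2 * f (1/2)"]
  show "((\<lambda>s. fM f (2 * s) / (2 * s) * (2 * f (1/2))) \<longlongrightarrow> 0) (at_right 0)"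
    by (simp add: mult.commute)
qed simp

lemma tendsto_quot_shrink_0:
  assumes "0 \<le> v"
  shows "(\<lambda>k. f (v / Suc k) / (v / Suc k)) \<longlonglongrightarrow> 0"
proof (cases "v = 0")
  case False
  have "(\<lambda>k. v * inverse (Suc k)) \<longlonglongrightarrow> v * 0"
    by (intro tendsto_mult tendsto_const LIMSEQ_inverse_real_of_nat)
  then have "filterlim (\<lambda>k. v / Suc k) (at_right 0) sequentially"
    using assms False by (intro tendsto_imp_filterlim_at_right) (auto simp: divide_inverse)
  from filterlim_compose[OF tendsto_quot_0 this] show ?thesis .
qed simp

lemma measurable_f_comp:
  assumes "g \<in> borel_measurable M" and "\<And>x. 0 \<le> g x"
  shows "(\<lambda>x. f (g x)) \<in> borel_measurable M"
proof -
  have "continuous_on UNIV (\<lambda>v. f (max 0 v))"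
    by (rule continuous_on_compose2[OF f_cont]) (auto intro!: continuous_intros)
  then have "(\<lambda>x. f (max 0 (g x))) \<in> borel_measurable M"
    using measurable_compose[OF assms(1) borel_measurable_continuous_onI] by blast
  then show ?thesis
    using assms(2) by (simp add: max_absorb2)
qed

lemma ennreal_mult_f_SUP:
  fixes X :: "nat \<Rightarrow> ennreal"
  assumes "incseq X" "(SUP k. X k) < \<infinity>" "0 \<le> c"
  shows "ennreal (c * f (enn2real (SUP k. X k))) = (SUP k. ennreal (c * f (enn2real (X k))))"
proof (rule LIMSEQ_unique)
  have "(\<lambda>k. enn2real (X k)) \<longlonglongrightarrow> enn2real (SUP k. X k)"
    using LIMSEQ_SUP[OF assms(1)] assms(2) by (intro tendsto_enn2real) auto
  then have "(\<lambda>k. f (enn2real (X k))) \<longlonglongrightarrow> f (enn2real (SUP k. X k))"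
    by (rule continuous_on_tendsto_compose[OF f_cont]) auto
  then show "(\<lambda>k. ennreal (c * f (enn2real (X k)))) \<longlonglongrightarrow> ennreal (c * f (enn2real (SUP k. X k)))"
    by (intro tendsto_ennrealI tendsto_mult tendsto_const)
  have "X k \<le> X (Suc k)" "X (Suc k) < \<infinity>" for k
    using assms(1,2) SUP_upper[of "Suc k" UNIV X] by (auto simp: incseq_Suc_iff)
  then have "incseq (\<lambda>k. ennreal (c * f (enn2real (X k))))"
    using assms(3) by (intro incseq_SucI ennreal_leI mult_left_mono f_mono enn2real_mono) auto
  then show "(\<lambda>k. ennreal (c * f (enn2real (X k)))) \<longlonglongrightarrow> (SUP k. ennreal (c * f (enn2real (X k))))"
    by (rule LIMSEQ_SUP)
qed

end

locale semilinear_heat = heat_kernel q Gam d + nonlinearity f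
  for q :: nat and Gam :: "real \<Rightarrow> real^'n::finite \<Rightarrow> real^'n \<Rightarrow> real" and d f +
  fixes \<phi> :: "real \<Rightarrow> real"
  assumes phi_nonneg: "\<forall>t\<ge>0. 0 \<le> \<phi> t"
    and phi_loc: "\<forall>T>0. set_integrable lborel {0..T} \<phi>"
begin

lemma integrable_phi_on: "0 < T \<Longrightarrow> integrable lborel (\<lambda>t. indicator {0..T} t * \<phi> t)"
  using phi_loc unfolding set_integrable_def by simp

lemma nn_integral_phi_unit_interval: "(\<integral>\<^sup>+t. ennreal (indicator {0..1} t * \<phi> t) \<partial>lborel) < \<infinity>"
  using nn_integral_eq_integral[OF integrable_phi_on[of 1]] phi_nonneg
  by (simp add: indicator_def)

text \<open>\<open>\<phi>\<close> is only locally integrable on \<open>[0,\<infinity>)\<close> and arbitrary at negative times, so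
  measurability arguments use its restriction to \<open>(0,\<infinity>)\<close>.\<close>
lemma measurable_phi_pos[measurable]: "(\<lambda>t. indicator {0<..} t * \<phi> t) \<in> borel_measurable borel"
proof (rule borel_measurable_LIMSEQ_real)
  show "(\<lambda>t. indicator {0<..} t * (indicator {0..real i + 1} t * \<phi> t)) \<in> borel_measurable borel" for i
    using borel_measurable_integrable[OF integrable_phi_on[of "real i + 1"]] by simp
  fix t :: real
  have "\<forall>\<^sub>F i in sequentially. t \<le> real i + 1"
    using eventually_ge_at_top[of "nat \<lceil>t\<rceil>"] by eventually_elim linarith
  then show "(\<lambda>i. indicator {0<..} t * (indicator {0..real i + 1} t * \<phi> t)) \<longlonglongrightarrow> indicator {0<..} t * \<phi> t"
    by (intro tendsto_eventually) (auto elim!: eventually_mono simp: indicator_def)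
qed

lemma measurable_indicator_phi_mult:
  assumes "S \<in> sets borel" "S \<subseteq> {0<..}" and [measurable]: "g \<in> borel_measurable borel"
  shows "(\<lambda>t. indicator S t * ennreal (\<phi> t * g t)) \<in> borel_measurable borel"
proof -
  have "(\<lambda>t. indicator S t * ennreal (\<phi> t * g t))
      = (\<lambda>t. indicator S t * ennreal (indicator {0<..} t * \<phi> t * g t))"
    using assms(2) by (auto simp: fun_eq_iff indicator_def)
  also have "\<dots> \<in> borel_measurable borel"
    using assms(1) by measurable
  finally show ?thesis .
qed

lemma measurable_quot_integrand:
  assumes "N \<in> borel_measurable borel" "\<And>\<tau>. 0 \<le> N \<tau>"
  shows "(\<lambda>\<tau>. indicator {0<..} \<tau> * ennreal (\<phi> \<tau> * f (N \<tau>) / N \<tau>)) \<in> borel_measurable borel"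
  using measurable_indicator_phi_mult[of "{0<..}" "\<lambda>\<tau>. f (N \<tau>) / N \<tau>"] assms
  by (simp add: measurable_f_comp borel_measurable_divide)

text \<open>The Duhamel map acts on \<open>ennreal\<close>-valued functions, so that monotone iteration takes
  place in a complete lattice; \<open>enn2real\<close> sends the value \<open>\<infinity>\<close> to the junk value 0.\<close>
definition duhamel :: "(real^'n \<Rightarrow> real) \<Rightarrow> (real \<Rightarrow> real^'n \<Rightarrow> ennreal) \<Rightarrow> real \<Rightarrow> real^'n \<Rightarrow> ennreal"
  where "duhamel u0 v t x =
    (\<integral>\<^sup>+y. ennreal (Gam t y x * u0 y) \<partial>lborel) +
    (\<integral>\<^sup>+\<tau>. indicator {0<..<t} \<tau> *
        (\<integral>\<^sup>+y. ennreal (Gam (t - \<tau>) y x * \<phi> \<tau> * f (enn2real (v \<tau> y))) \<partial>lborel) \<partial>lborel)"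

lemma global_mild_solutionI:
  assumes "(\<lambda>p. u (fst p) (snd p)) \<in> borel_measurable borel"
    and "\<And>t x. 0 < t \<Longrightarrow> 0 \<le> u t x"
    and "\<And>t x. 0 < t \<Longrightarrow> ennreal (u t x) = duhamel u0 (\<lambda>t x. ennreal (u t x)) t x"
  shows "global_mild_solution Gam \<phi> f u0 u"
proof -
  have "duhamel u0 (\<lambda>t x. ennreal (u t x)) t x =
      (\<integral>\<^sup>+y. ennreal (Gam t y x * u0 y) \<partial>lborel) +
      (\<integral>\<^sup>+\<tau>. indicator {0<..<t} \<tau> *
        (\<integral>\<^sup>+y. ennreal (Gam (t - \<tau>) y x * \<phi> \<tau> * f (u \<tau> y)) \<partial>lborel) \<partial>lborel)" for t x
    unfolding duhamel_def using assms(2)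
    by (intro arg_cong2[where f = "(+)"] refl nn_integral_cong) (auto simp: indicator_def)
  then show ?thesis
    using assms unfolding global_mild_solution_def by simp
qed

lemma duhamel_phi_pos:
  "duhamel u0 v t x =
    (\<integral>\<^sup>+y. ennreal (Gam t y x * u0 y) \<partial>lborel) +
    (\<integral>\<^sup>+\<tau>. indicator {0<..<t} \<tau> * (\<integral>\<^sup>+y. ennreal (Gam (t - \<tau>) y x *
        (indicator {0<..} \<tau> * \<phi> \<tau>) * f (enn2real (v \<tau> y))) \<partial>lborel) \<partial>lborel)"
  unfolding duhamel_def
  by (intro arg_cong2[where f = "(+)"] refl nn_integral_cong) (auto simp: indicator_def)

lemma duhamel_measurable:
  assumes [measurable]: "u0 \<in> borel_measurable borel"
    and "(\<lambda>p. v (fst p) (snd p)) \<in> borel_measurable (lborel \<Otimes>\<^sub>M lborel)"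
  shows "(\<lambda>p. duhamel u0 v (fst p) (snd p)) \<in> borel_measurable (lborel \<Otimes>\<^sub>M lborel)"
proof -
  have "(\<lambda>p. f (enn2real (v (fst p) (snd p)))) \<in> borel_measurable (lborel \<Otimes>\<^sub>M lborel)"
    using assms(2) by (intro measurable_f_comp) auto
  note [measurable] = measurable_compose_uncurried[OF this]
  show ?thesis
    unfolding duhamel_phi_pos by measurable
qed

lemma duhamel_mono:
  assumes "\<And>t x. v1 t x \<le> v2 t x" and "\<And>t x. v2 t x < \<infinity>"
  shows "duhamel u0 v1 t x \<le> duhamel u0 v2 t x"
proof -
  have "f (enn2real (v1 \<tau> y)) \<le> f (enn2real (v2 \<tau> y))" for \<tau> y
    using assms[of \<tau> y] by (intro f_mono enn2real_mono) auto
  then show ?thesis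
    unfolding duhamel_def using phi_nonneg Gam_nonneg
    by (intro add_left_mono nn_integral_mono)
       (auto simp: indicator_def intro!: nn_integral_mono ennreal_leI mult_left_mono)
qed

lemma duhamel_SUP:
  fixes v :: "nat \<Rightarrow> real \<Rightarrow> real^'n \<Rightarrow> ennreal"
  assumes inc: "\<And>t x. incseq (\<lambda>k. v k t x)" and fin: "\<And>t x. (SUP k. v k t x) < \<infinity>"
    and meas: "\<And>k. (\<lambda>p. v k (fst p) (snd p)) \<in> borel_measurable (lborel \<Otimes>\<^sub>M lborel)"
  shows "duhamel u0 (\<lambda>t x. SUP k. v k t x) t x = (SUP k. duhamel u0 (v k) t x)"
proof -
  define F where "F k \<tau> y = ennreal (Gam (t - \<tau>) y x * (indicator {0<..} \<tau> * \<phi> \<tau>) * f (enn2real (v k \<tau> y)))"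
    for k \<tau> y
  have F_measurable[measurable]: "(\<lambda>p. F k (fst p) (snd p)) \<in> borel_measurable (lborel \<Otimes>\<^sub>M lborel)" for k
  proof -
    have "(\<lambda>p. f (enn2real (v k (fst p) (snd p)))) \<in> borel_measurable (lborel \<Otimes>\<^sub>M lborel)"
      using meas by (intro measurable_f_comp) auto
    note [measurable] = measurable_compose_uncurried[OF this]
    show ?thesis
      unfolding F_def by measurable
  qed
  have phi_pos: "0 \<le> Gam (t - \<tau>) y x * (indicator {0<..} \<tau> * \<phi> \<tau>)" for \<tau> y
    using phi_nonneg Gam_nonneg by (simp add: indicator_def)
  have F_SUP: "ennreal (Gam (t - \<tau>) y x * (indicator {0<..} \<tau> * \<phi> \<tau>) * f (enn2real (SUP k. v k \<tau> y)))
      = (SUP k. F k \<tau> y)" for \<tau> y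
    unfolding F_def using inc fin phi_pos by (rule ennreal_mult_f_SUP)
  have F_incseq: "incseq (\<lambda>k. F k \<tau>)" for \<tau>
  proof (intro incseq_SucI le_funI)
    fix k y
    have "enn2real (v k \<tau> y) \<le> enn2real (v (Suc k) \<tau> y)"
      using inc[of \<tau> y] fin[of \<tau> y] SUP_upper[of "Suc k" UNIV "\<lambda>k. v k \<tau> y"]
      by (intro enn2real_mono) (auto simp: incseq_Suc_iff)
    then show "F k \<tau> y \<le> F (Suc k) \<tau> y"
      unfolding F_def using phi_pos by (intro ennreal_leI mult_left_mono f_mono) auto
  qed
  have "(\<integral>\<^sup>+\<tau>. indicator {0<..<t} \<tau> * (\<integral>\<^sup>+y. (SUP k. F k \<tau> y) \<partial>lborel) \<partial>lborel)
      = (\<integral>\<^sup>+\<tau>. (SUP k. indicator {0<..<t} \<tau> * (\<integral>\<^sup>+y. F k \<tau> y \<partial>lborel)) \<partial>lborel)"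
  proof (intro nn_integral_cong)
    fix \<tau>
    have "F k \<tau> \<in> borel_measurable lborel" for k
      using measurable_Pair2[OF F_measurable[of k], of \<tau>] by simp
    then show "indicator {0<..<t} \<tau> * (\<integral>\<^sup>+y. (SUP k. F k \<tau> y) \<partial>lborel)
        = (SUP k. indicator {0<..<t} \<tau> * (\<integral>\<^sup>+y. F k \<tau> y \<partial>lborel))"
      by (simp add: nn_integral_monotone_convergence_SUP[OF F_incseq] SUP_mult_left_ennreal)
  qed
  also have "\<dots> = (SUP k. \<integral>\<^sup>+\<tau>. indicator {0<..<t} \<tau> * (\<integral>\<^sup>+y. F k \<tau> y \<partial>lborel) \<partial>lborel)"
  proof (rule nn_integral_monotone_convergence_SUP)
    show "incseq (\<lambda>k \<tau>. indicator {0<..<t} \<tau> * (\<integral>\<^sup>+y. F k \<tau> y \<partial>lborel))"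
      using F_incseq by (auto simp: incseq_def le_fun_def intro!: mult_left_mono nn_integral_mono)
  qed measurable
  finally show ?thesis
    unfolding duhamel_phi_pos F_SUP by (simp add: F_def ennreal_SUP_add_right)
qed

lemma global_mild_solution_if_supersolution:
  fixes U :: "real \<Rightarrow> real^'n \<Rightarrow> ennreal"
  assumes [measurable]: "u0 \<in> borel_measurable borel"
    and U_finite: "\<And>t x. U t x < \<infinity>"
    and super: "\<And>v t x. (\<And>t x. v t x \<le> U t x) \<Longrightarrow> duhamel u0 v t x \<le> U t x"
  shows "\<exists>u. global_mild_solution Gam \<phi> f u0 u"
proof -
  define v where "v k = (duhamel u0 ^^ k) (\<lambda>t x. 0)" for k
  have v_Suc: "v (Suc k) = duhamel u0 (v k)" for k
    by (simp add: v_def)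
  have v_le_U: "v k t x \<le> U t x" for k t x
  proof (induction k arbitrary: t x)
    case (Suc k)
    then show ?case
      unfolding v_Suc by (rule super)
  qed (simp add: v_def)
  have v_incseq: "incseq (\<lambda>k. v k t x)" for t x
  proof (intro incseq_SucI)
    show "v k t x \<le> v (Suc k) t x" for k
    proof (induction k arbitrary: t x)
      case (Suc k)
      have "duhamel u0 (v k) t x \<le> duhamel u0 (v (Suc k)) t x"
        by (rule duhamel_mono[OF Suc.IH le_less_trans[OF v_le_U U_finite]])
      then show ?case
        by (simp only: v_Suc)
    qed (simp add: v_def)
  qed
  have v_measurable: "(\<lambda>p. v k (fst p) (snd p)) \<in> borel_measurable (lborel \<Otimes>\<^sub>M lborel)" for k
  proof (induction k)
    case (Suc k)
    then show ?case
      unfolding v_Suc by (rule duhamel_measurable[rotated]) measurable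
  qed (simp add: v_def)
  define u where "u t x = enn2real (SUP k. v k t x)" for t x
  have SUP_v_finite: "(SUP k. v k t x) < \<infinity>" for t x
    using v_le_U U_finite by (intro le_less_trans[OF SUP_least])
  then have ennreal_u: "ennreal (u t x) = (SUP k. v k t x)" for t x
    by (simp add: u_def less_top)
  have "duhamel u0 (\<lambda>t x. SUP k. v k t x) t x = (SUP k. v (Suc k) t x)" for t x
    using duhamel_SUP[OF v_incseq SUP_v_finite v_measurable] by (simp add: v_Suc)
  also have "(SUP k. v (Suc k) t x) = (SUP k. v k t x)" for t x
    using v_incseq[of t x] by (intro SUP_eq) (auto simp: incseq_Suc_iff)
  finally have fixpoint: "duhamel u0 (\<lambda>t x. SUP k. v k t x) t x = (SUP k. v k t x)" for t x .
  have "global_mild_solution Gam \<phi> f u0 u"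
  proof (rule global_mild_solutionI)
    have "(\<lambda>p. u (fst p) (snd p)) \<in> borel_measurable (lborel \<Otimes>\<^sub>M lborel)"
      using v_measurable unfolding u_def by measurable
    then show "(\<lambda>p. u (fst p) (snd p)) \<in> borel_measurable borel"
      by (simp add: lborel_prod)
  next
    show "0 \<le> u t x" for t x
      by (simp add: u_def)
  next
    show "ennreal (u t x) = duhamel u0 (\<lambda>t x. ennreal (u t x)) t x" for t x
      unfolding ennreal_u by (rule fixpoint[symmetric])
  qed
  then show ?thesis
    by blast
qed

lemma nn_integral_source_le_heat_sg:
  assumes w_nonneg: "\<And>y. 0 \<le> w y" and w_integrable: "integrable lborel w"
    and "0 < \<delta>" "0 < \<tau>" "\<tau> < t"
    and v_le: "\<And>y. v y \<le> ennreal (\<delta> * heat_sg Gam w \<tau> y)"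
  shows "(\<integral>\<^sup>+y. ennreal (Gam (t - \<tau>) y x * \<phi> \<tau> * f (enn2real (v y))) \<partial>lborel)
      \<le> ennreal (\<phi> \<tau> * (f (\<delta> * heat_Linf w \<tau>) / (\<delta> * heat_Linf w \<tau>))) * ennreal (\<delta> * heat_sg Gam w t x)"
proof -
  define r where "r = f (\<delta> * heat_Linf w \<tau>) / (\<delta> * heat_Linf w \<tau>)"
  have r_nonneg: "0 \<le> r"
    unfolding r_def using \<open>0 < \<delta>\<close> heat_Linf_nonneg by (intro quot_nonneg) simp
  have phi: "0 \<le> \<phi> \<tau>"
    using phi_nonneg \<open>0 < \<tau>\<close> by simp
  have A_nonneg: "0 \<le> heat_sg Gam w \<tau> y" for y
    using heat_sg_nonneg[OF w_nonneg w_integrable] .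
  have f_bound: "f (enn2real (v y)) \<le> \<delta> * heat_sg Gam w \<tau> y * r"
    if "heat_sg Gam w \<tau> y \<le> heat_Linf w \<tau>" for y
  proof -
    have "f (enn2real (v y)) \<le> f (\<delta> * heat_sg Gam w \<tau> y)"
      using v_le[of y] \<open>0 < \<delta>\<close> A_nonneg[of y] by (intro f_mono enn2real_leI) auto
    also have "\<dots> \<le> \<delta> * heat_sg Gam w \<tau> y * r"
      unfolding r_def using that \<open>0 < \<delta>\<close> A_nonneg[of y] by (intro f_le_mult_quot) auto
    finally show ?thesis .
  qed
  have "AE y in lborel. ennreal (Gam (t - \<tau>) y x * \<phi> \<tau> * f (enn2real (v y)))
      \<le> ennreal (\<phi> \<tau> * r * \<delta>) * (ennreal (Gam (t - \<tau>) y x) * ennreal (heat_sg Gam w \<tau> y))"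
    using AE_heat_sg_le_heat_Linf[OF w_nonneg w_integrable \<open>0 < \<tau>\<close>]
  proof eventually_elim
    case (elim y)
    have "Gam (t - \<tau>) y x * \<phi> \<tau> * f (enn2real (v y))
        \<le> Gam (t - \<tau>) y x * \<phi> \<tau> * (\<delta> * heat_sg Gam w \<tau> y * r)"
      using f_bound[OF elim] Gam_nonneg phi by (intro mult_left_mono) auto
    also have "\<dots> = (\<phi> \<tau> * r * \<delta>) * (Gam (t - \<tau>) y x * heat_sg Gam w \<tau> y)"
      by (simp add: mult_ac)
    finally show ?case
      using phi r_nonneg \<open>0 < \<delta>\<close> Gam_nonneg A_nonneg
      by (simp add: ennreal_mult[symmetric] ennreal_leI)
  qed
  then have "(\<integral>\<^sup>+y. ennreal (Gam (t - \<tau>) y x * \<phi> \<tau> * f (enn2real (v y))) \<partial>lborel)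
      \<le> (\<integral>\<^sup>+y. ennreal (\<phi> \<tau> * r * \<delta>) * (ennreal (Gam (t - \<tau>) y x) * ennreal (heat_sg Gam w \<tau> y)) \<partial>lborel)"
    by (rule nn_integral_mono_AE)
  also have "\<dots> = ennreal (\<phi> \<tau> * r * \<delta>) * ennreal (heat_sg Gam w t x)"
    using heat_sg_measurable[OF w_nonneg w_integrable]
    by (simp add: nn_integral_cmult heat_sg_semigroup[OF w_nonneg w_integrable \<open>0 < \<tau>\<close> \<open>\<tau> < t\<close>])
  also have "\<dots> = ennreal (\<phi> \<tau> * r) * ennreal (\<delta> * heat_sg Gam w t x)"
    using phi r_nonneg \<open>0 < \<delta>\<close> A_nonneg heat_sg_nonneg[OF w_nonneg w_integrable]
    by (simp add: ennreal_mult[symmetric] mult_ac)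
  finally show ?thesis
    unfolding r_def .
qed

lemma duhamel_le_heat_sg:
  assumes w_nonneg: "\<And>y. 0 \<le> w y" and w_integrable: "integrable lborel w" and "0 < \<delta>"
    and small: "(\<integral>\<^sup>+\<tau>. indicator {0<..} \<tau> *
        ennreal (\<phi> \<tau> * (f (\<delta> * heat_Linf w \<tau>) / (\<delta> * heat_Linf w \<tau>))) \<partial>lborel) \<le> 1/2"
    and v_le: "\<And>t x. v t x \<le> ennreal (\<delta> * heat_sg Gam w t x)"
  shows "duhamel (\<lambda>y. \<delta> / 2 * w y) v t x \<le> ennreal (\<delta> * heat_sg Gam w t x)"
proof (cases "0 < t")
  case False
  then show ?thesis
    by (simp add: duhamel_def Gam_eq_0)
next
  case True
  let ?A = "heat_sg Gam w t x"
  have A_nonneg: "0 \<le> ?A"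
    using heat_sg_nonneg[OF w_nonneg w_integrable] .
  have "(\<integral>\<^sup>+y. ennreal (Gam t y x * (\<delta> / 2 * w y)) \<partial>lborel)
      = (\<integral>\<^sup>+y. ennreal (\<delta> / 2) * (ennreal (Gam t y x) * ennreal (w y)) \<partial>lborel)"
    using \<open>0 < \<delta>\<close> Gam_nonneg w_nonneg
    by (intro nn_integral_cong) (simp add: ennreal_mult[symmetric] mult_ac)
  also have "\<dots> = ennreal (\<delta> / 2 * ?A)"
    using \<open>0 < \<delta>\<close> True w_measurable[OF w_nonneg w_integrable]
    by (simp add: nn_integral_cmult ennreal_heat_sg[OF w_nonneg w_integrable, symmetric]
                  ennreal_mult[symmetric] A_nonneg)
  finally have initial: "(\<integral>\<^sup>+y. ennreal (Gam t y x * (\<delta> / 2 * w y)) \<partial>lborel) = ennreal (\<delta> / 2 * ?A)" .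
  have "(\<integral>\<^sup>+\<tau>. indicator {0<..<t} \<tau> *
          (\<integral>\<^sup>+y. ennreal (Gam (t - \<tau>) y x * \<phi> \<tau> * f (enn2real (v \<tau> y))) \<partial>lborel) \<partial>lborel)
      \<le> (\<integral>\<^sup>+\<tau>. ennreal (\<delta> * ?A) * (indicator {0<..} \<tau> *
          ennreal (\<phi> \<tau> * (f (\<delta> * heat_Linf w \<tau>) / (\<delta> * heat_Linf w \<tau>)))) \<partial>lborel)"
    using nn_integral_source_le_heat_sg[OF w_nonneg w_integrable \<open>0 < \<delta>\<close> _ _ v_le]
    by (intro nn_integral_mono) (auto simp: indicator_def mult.commute)
  also have "\<dots> \<le> ennreal (\<delta> * ?A) * (1/2)"
    using small heat_Linf_measurable[OF w_nonneg w_integrable] \<open>0 < \<delta>\<close> heat_Linf_nonneg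
    by (subst nn_integral_cmult) (auto intro!: mult_left_mono measurable_quot_integrand)
  finally have "duhamel (\<lambda>y. \<delta> / 2 * w y) v t x \<le> ennreal (\<delta> / 2 * ?A) + ennreal (\<delta> * ?A) * (1/2)"
    unfolding duhamel_def initial by (rule add_left_mono)
  also have "\<dots> = ennreal (\<delta> * ?A)"
  proof -
    have "ennreal (a / 2) + ennreal a * (1/2) = ennreal a" if "0 \<le> a" for a :: real
      using that
      by (simp add: ennreal_times_divide ennreal_divide_numeral ennreal_plus[symmetric] del: ennreal_plus)
    from this[of "\<delta> * ?A"] show ?thesis
      using \<open>0 < \<delta>\<close> A_nonneg by simp
  qed
  finally show ?thesis .
qed

lemma exists_scale_quot_integral_less:
  assumes [measurable]: "N \<in> borel_measurable borel" and N_nonneg: "\<And>\<tau>. 0 \<le> N \<tau>"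
    and finite: "(\<integral>\<^sup>+\<tau>. indicator {0<..} \<tau> * ennreal (\<phi> \<tau> * f (N \<tau>) / N \<tau>) \<partial>lborel) \<noteq> \<infinity>"
    and "0 < \<epsilon>"
  shows "\<exists>\<delta>>0. (\<integral>\<^sup>+\<tau>. indicator {0<..} \<tau> * ennreal (\<phi> \<tau> * f (\<delta> * N \<tau>) / (\<delta> * N \<tau>)) \<partial>lborel) < \<epsilon>"
proof -
  define G where "G k \<tau> = indicator {0<..} \<tau> *
      ennreal (\<phi> \<tau> * f (N \<tau> / Suc k) / (N \<tau> / Suc k))" for k :: nat and \<tau>
  have G_measurable: "G k \<in> borel_measurable lborel" for k
    unfolding G_def using N_nonneg measurable_quot_integrand[of "\<lambda>\<tau>. N \<tau> / Suc k"] by simp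
  have G_le: "G k \<tau> \<le> G 0 \<tau>" for k \<tau>
  proof -
    have "N \<tau> / Suc k \<le> N \<tau>"
      using divide_left_mono[of 1 "real (Suc k)" "N \<tau>"] N_nonneg[of \<tau>] by simp
    then have "f (N \<tau> / Suc k) / (N \<tau> / Suc k) \<le> f (N \<tau>) / N \<tau>"
      using N_nonneg[of \<tau>] by (intro quot_mono) auto
    then have "0 < \<tau> \<Longrightarrow> \<phi> \<tau> * (f (N \<tau> / Suc k) / (N \<tau> / Suc k)) \<le> \<phi> \<tau> * (f (N \<tau>) / N \<tau>)"
      using phi_nonneg by (intro mult_left_mono) auto
    then show ?thesis
      unfolding G_def by (auto simp: indicator_def intro!: ennreal_leI)
  qed
  have G_lim: "(\<lambda>k. G k \<tau>) \<longlonglongrightarrow> 0" for \<tau>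
  proof -
    have "(\<lambda>k. ennreal (\<phi> \<tau> * (f (N \<tau> / Suc k) / (N \<tau> / Suc k)))) \<longlonglongrightarrow> ennreal (\<phi> \<tau> * 0)"
      using N_nonneg by (intro tendsto_ennrealI tendsto_mult tendsto_const tendsto_quot_shrink_0)
    then have "(\<lambda>k. indicator {0<..} \<tau> * ennreal (\<phi> \<tau> * (f (N \<tau> / Suc k) / (N \<tau> / Suc k))))
        \<longlonglongrightarrow> indicator {0<..} \<tau> * ennreal (\<phi> \<tau> * 0)"
      by (intro ennreal_tendsto_cmult) (simp_all add: indicator_def)
    then show ?thesis
      by (simp add: G_def mult.assoc)
  qed
  have G0_finite: "(\<integral>\<^sup>+\<tau>. G 0 \<tau> \<partial>lborel) < \<infinity>"
    using finite by (simp add: G_def less_top)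
  have "(\<lambda>k. \<integral>\<^sup>+\<tau>. G k \<tau> \<partial>lborel) \<longlonglongrightarrow> (\<integral>\<^sup>+\<tau>. 0 \<partial>lborel)"
    using nn_integral_dominated_convergence[of G lborel "\<lambda>_. 0" "G 0"] G_measurable G_le G_lim G0_finite
    by (simp add: top.not_eq_extremum)
  then have "\<forall>\<^sub>F k in sequentially. (\<integral>\<^sup>+\<tau>. G k \<tau> \<partial>lborel) < \<epsilon>"
    using \<open>0 < \<epsilon>\<close> by (intro order_tendstoD(2)) simp_all
  then obtain k where "(\<integral>\<^sup>+\<tau>. G k \<tau> \<partial>lborel) < \<epsilon>"
    by (auto simp: eventually_sequentially)
  moreover have "G k \<tau> = indicator {0<..} \<tau> *
      ennreal (\<phi> \<tau> * f (inverse (Suc k) * N \<tau>) / (inverse (Suc k) * N \<tau>))" for \<tau>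
    by (simp add: G_def divide_inverse mult.commute)
  ultimately show ?thesis
    by (intro exI[of _ "inverse (Suc k)"]) simp
qed

lemma global_mild_solution_if_quot_integral_finite:
  assumes "pos_L1 w"
    and "(\<integral>\<^sup>+\<tau>. indicator {0<..} \<tau> * ennreal (\<phi> \<tau> * f (heat_Linf w \<tau>) / heat_Linf w \<tau>) \<partial>lborel) \<noteq> \<infinity>"
  shows "\<exists>u0 u. pos_L1 u0 \<and> global_mild_solution Gam \<phi> f u0 u"
proof -
  have w_nonneg: "\<And>y. 0 \<le> w y" and w_integrable: "integrable lborel w"
    using assms(1) by (auto simp: pos_L1_def)
  obtain \<delta> where "0 < \<delta>" and small: "(\<integral>\<^sup>+\<tau>. indicator {0<..} \<tau> *
      ennreal (\<phi> \<tau> * f (\<delta> * heat_Linf w \<tau>) / (\<delta> * heat_Linf w \<tau>)) \<partial>lborel) < 1/2"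
    using exists_scale_quot_integral_less[OF heat_Linf_measurable[OF w_nonneg w_integrable]
        heat_Linf_nonneg assms(2), of "1/2"]
    by (auto simp: ennreal_zero_less_divide)
  have "pos_L1 (\<lambda>y. \<delta> / 2 * w y)"
    using assms(1) \<open>0 < \<delta>\<close> by (simp add: pos_L1_def)
  moreover have "\<exists>u. global_mild_solution Gam \<phi> f (\<lambda>y. \<delta> / 2 * w y) u"
  proof (rule global_mild_solution_if_supersolution)
    show "(\<lambda>y. \<delta> / 2 * w y) \<in> borel_measurable borel"
      using w_measurable[OF w_nonneg w_integrable] by simp
    show "ennreal (\<delta> * heat_sg Gam w t x) < \<infinity>" for t x
      by simp
    show "duhamel (\<lambda>y. \<delta> / 2 * w y) v t x \<le> ennreal (\<delta> * heat_sg Gam w t x)"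
      if "\<And>t x. v t x \<le> ennreal (\<delta> * heat_sg Gam w t x)" for v t x
      using small by (intro duhamel_le_heat_sg[OF w_nonneg w_integrable \<open>0 < \<delta>\<close> _ that]) simp
  qed
  ultimately show ?thesis
    by blast
qed

lemma quot_integrand_le:
  assumes "0 < m" "0 < \<omega>" "0 \<le> N" "N \<le> m" "N \<le> \<omega> * \<tau> powr (- a)"
  shows "indicator {0<..} \<tau> * ennreal (\<phi> \<tau> * f N / N)
    \<le> ennreal (f m / m) * ennreal (indicator {0..1} \<tau> * \<phi> \<tau>)
      + ennreal (1 / \<omega>) * (indicator {1..} \<tau> * ennreal (\<phi> \<tau> * \<tau> powr a * f (\<omega> * \<tau> powr (- a))))"
proof (cases "0 < \<tau>")
  case True
  have phi: "0 \<le> \<phi> \<tau>"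
    using phi_nonneg True by simp
  show ?thesis
  proof (cases "\<tau> \<le> 1")
    case True
    have "\<phi> \<tau> * (f N / N) \<le> \<phi> \<tau> * (f m / m)"
      using assms phi by (intro mult_left_mono quot_mono) auto
    then show ?thesis
      using True \<open>0 < \<tau>\<close> phi quot_nonneg[of m] \<open>0 < m\<close>
      by (simp add: ennreal_mult[symmetric] ennreal_leI add_increasing2 mult.commute)
  next
    case False
    let ?b = "\<omega> * \<tau> powr (- a)"
    have "f N / N \<le> f ?b / ?b"
      using assms by (intro quot_mono) auto
    also have "\<dots> = 1 / \<omega> * (\<tau> powr a * f ?b)"
      using \<open>0 < \<omega>\<close> \<open>0 < \<tau>\<close> by (simp add: powr_minus divide_simps)
    finally have "\<phi> \<tau> * (f N / N) \<le> \<phi> \<tau> * (1 / \<omega> * (\<tau> powr a * f ?b))"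
      using phi by (rule mult_left_mono)
    then have "\<phi> \<tau> * (f N / N) \<le> 1 / \<omega> * (\<phi> \<tau> * \<tau> powr a * f ?b)"
      by (simp add: mult_ac)
    then show ?thesis
      using False \<open>0 < \<tau>\<close> phi \<open>0 < \<omega>\<close> f_nonneg[of ?b]
      by (simp add: ennreal_mult[symmetric] ennreal_leI add_increasing)
  qed
qed simp

lemma quot_integral_finite_if_decay_integral_finite:
  assumes "0 < \<omega>"
    and decay_finite: "(\<integral>\<^sup>+\<tau>. indicator {1..} \<tau> *
        ennreal (\<phi> \<tau> * \<tau> powr (real q / 2) * f (\<omega> * \<tau> powr (- real q / 2))) \<partial>lborel) \<noteq> \<infinity>"
  shows "\<exists>w. pos_L1 w \<and>
    (\<integral>\<^sup>+\<tau>. indicator {0<..} \<tau> * ennreal (\<phi> \<tau> * f (heat_Linf w \<tau>) / heat_Linf w \<tau>) \<partial>lborel) \<noteq> \<infinity>"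
proof -
  obtain K where "0 < K" and K: "\<forall>s x y. 0 < s \<longrightarrow> Gam s x y \<le> K / s powr (real q / 2)"
    using Gam_le_powr by blast
  define m where "m = \<omega> / K"
  define w where "w y = m * indicator (cbox 0 One) y" for y :: "real^'n"
  define h where "h \<tau> = indicator {1..} \<tau> *
      ennreal (\<phi> \<tau> * \<tau> powr (real q / 2) * f (\<omega> * \<tau> powr (- real q / 2)))" for \<tau>
  have "0 < m"
    using \<open>0 < \<omega>\<close> \<open>0 < K\<close> by (simp add: m_def)
  have "pos_L1 w"
    using \<open>0 < m\<close> by (simp add: pos_L1_def w_def[abs_def] integrable_real_indicator
        emeasure_lborel_cbox_finite measure_def emeasure_lborel_cbox_eq)
  have "heat_Linf w \<tau> \<le> min m (\<omega> * \<tau> powr (- (real q / 2)))" for \<tau>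
  proof (cases "0 < \<tau>")
    case True
    then show ?thesis
      using heat_Linf_unit_cube_le[OF K True less_imp_le[OF \<open>0 < m\<close>]] \<open>0 < K\<close>
      by (simp add: w_def[abs_def] m_def powr_minus divide_simps)
  qed (use \<open>0 < m\<close> \<open>0 < \<omega>\<close> in \<open>simp add: heat_Linf_eq_0\<close>)
  then have bound: "indicator {0<..} \<tau> * ennreal (\<phi> \<tau> * f (heat_Linf w \<tau>) / heat_Linf w \<tau>)
      \<le> ennreal (f m / m) * ennreal (indicator {0..1} \<tau> * \<phi> \<tau>) + ennreal (1 / \<omega>) * h \<tau>" for \<tau>
    using quot_integrand_le[OF \<open>0 < m\<close> \<open>0 < \<omega>\<close> heat_Linf_nonneg] by (simp add: h_def)
  have "(\<lambda>\<tau>. f (\<omega> * \<tau> powr (- real q / 2))) \<in> borel_measurable borel"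
    using \<open>0 < \<omega>\<close> by (intro measurable_f_comp) auto
  then have [measurable]: "h \<in> borel_measurable borel"
    using measurable_indicator_phi_mult[of "{1..}" "\<lambda>\<tau>. \<tau> powr (real q / 2) * f (\<omega> * \<tau> powr (- real q / 2))"]
    unfolding h_def[abs_def] by (simp add: mult.assoc subset_eq)
  have [measurable]: "(\<lambda>\<tau>. indicator {0..1} \<tau> * \<phi> \<tau>) \<in> borel_measurable borel"
    using borel_measurable_integrable[OF integrable_phi_on[of 1]] by simp
  have "(\<integral>\<^sup>+\<tau>. indicator {0<..} \<tau> * ennreal (\<phi> \<tau> * f (heat_Linf w \<tau>) / heat_Linf w \<tau>) \<partial>lborel)
      \<le> (\<integral>\<^sup>+\<tau>. ennreal (f m / m) * ennreal (indicator {0..1} \<tau> * \<phi> \<tau>) + ennreal (1 / \<omega>) * h \<tau> \<partial>lborel)"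
    by (rule nn_integral_mono) (rule bound)
  also have "\<dots> = ennreal (f m / m) * (\<integral>\<^sup>+\<tau>. ennreal (indicator {0..1} \<tau> * \<phi> \<tau>) \<partial>lborel)
      + ennreal (1 / \<omega>) * (\<integral>\<^sup>+\<tau>. h \<tau> \<partial>lborel)"
    by (simp add: nn_integral_add nn_integral_cmult)
  also have "\<dots> < \<infinity>"
    using nn_integral_phi_unit_interval decay_finite
    by (simp add: h_def ennreal_mult_less_top less_top)
  finally show ?thesis
    using \<open>pos_L1 w\<close> by auto
qed

end

theorem theorem4p1:
  fixes \<sigma> :: "'n::finite \<Rightarrow> nat"
    and Gam :: "real \<Rightarrow> real^'n \<Rightarrow> real^'n \<Rightarrow> real"
    and d :: "real^'n \<Rightarrow> real^'n \<Rightarrow> real"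
    and f \<phi> :: "real \<Rightarrow> real"
  assumes sigma: "homog_exponents \<sigma>"
    and dist: "cc_metric d"
    and kernel: "heat_kernel_props (hom_dim \<sigma>) Gam d"
    and f_cont: "continuous_on {0..} f"
    and f0: "f 0 = 0"
    and f_pos: "\<forall>v>0. 0 < f v"
    and f_quot_mono: "mono_on {0<..} (\<lambda>v. f v / v)"
    and fM_lim: "((\<lambda>v. fM f v / v) \<longlongrightarrow> 0) (at_right 0)"
    and phi_nonneg: "\<forall>t\<ge>0. 0 \<le> \<phi> t"
    and phi_loc: "\<forall>T>0. set_integrable lborel {0..T} \<phi>"
    and no_global: "\<not> (\<exists>u0 u. pos_L1 u0 \<and> global_mild_solution Gam \<phi> f u0 u)"
  shows "(\<forall>w. pos_L1 w \<longrightarrow>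
            (\<integral>\<^sup>+\<tau>. indicator {0<..} \<tau> *
               ennreal (\<phi> \<tau> * f (real_of_ereal (Linf_norm (heat_sg Gam w \<tau>)))
                        / real_of_ereal (Linf_norm (heat_sg Gam w \<tau>))) \<partial>lborel) = \<infinity>)
       \<and> (\<forall>\<omega>>0.
            (\<integral>\<^sup>+\<tau>. indicator {1..} \<tau> *
               ennreal (\<phi> \<tau> * \<tau> powr (real (hom_dim \<sigma>) / 2)
                        * f (\<omega> * \<tau> powr (- real (hom_dim \<sigma>) / 2))) \<partial>lborel) = \<infinity>)"
proof -
  interpret semilinear_heat "hom_dim \<sigma>" Gam d f \<phi>
    using kernel f_cont f0 f_pos f_quot_mono fM_lim phi_nonneg phi_loc by unfold_locales auto
  have part_i: "(\<integral>\<^sup>+\<tau>. indicator {0<..} \<tau> * ennreal (\<phi> \<tau> * f (heat_Linf w \<tau>) / heat_Linf w \<tau>) \<partial>lborel) = \<infinity>"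
    if "pos_L1 w" for w
    using global_mild_solution_if_quot_integral_finite[OF that] no_global by blast
  show ?thesis
  proof (intro conjI allI impI)
    show "(\<integral>\<^sup>+\<tau>. indicator {0<..} \<tau> *
        ennreal (\<phi> \<tau> * f (real_of_ereal (Linf_norm (heat_sg Gam w \<tau>)))
          / real_of_ereal (Linf_norm (heat_sg Gam w \<tau>))) \<partial>lborel) = \<infinity>" if "pos_L1 w" for w
      using part_i[OF that] by (simp add: heat_Linf_def)
    show "(\<integral>\<^sup>+\<tau>. indicator {1..} \<tau> *
        ennreal (\<phi> \<tau> * \<tau> powr (real (hom_dim \<sigma>) / 2)
          * f (\<omega> * \<tau> powr (- real (hom_dim \<sigma>) / 2))) \<partial>lborel) = \<infinity>" if "0 < \<omega>" for \<omega>
      using quot_integral_finite_if_decay_integral_finite[OF that] part_i by blast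
  qed
qed

end
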